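(* Consider the system $x(k+1)=Ax(k)+Bu(k)$ with $A\in\mathbb{R}^{n\times n}$, $B\in\mathbb{R}^{n\times m}$ and $(A,B)$ controllable. Let $\{u_i^{[0,T_i-1]},x_i^{[0,T_i-1]}\}_{i=1}^p$ be $p$ input-state trajectories of this system (i.e. $x_i(k+1)=Ax_i(k)+Bu_i(k)$). Let $L\ge1$ and let $\alpha_1,\dots,\alpha_p$ be any nonzero real weights (used in all matrices below). 1) If $T_1=\dots=T_p=T_0$ and $\{u_i^{[0,T_0-1]}\}_{i=1}^p$ are CCPE of order $L+n$, then $\operatorname{rank}\begin{bmatrix}H_1^{cum}(\{x_i^{[0,T_0-L]}\}_{i=1}^p)\\ H_L^{cum}(\{u_i^{[0,T_0-1]}\}_{i=1}^p)\end{bmatrix}=n+mL$. 2) If $\{u_i^{[0,T_i-1]}\}_{i=1}^p$ are MCPE of order $L+n$, then $\operatorname{rank}\begin{bmatrix}H_1^{mos}(\{x_i^{[0,T_i-L]}\}_{i=1}^p)\\ H_L^{mos}(\{u_i^{[0,T_i-1]}\}_{i=1}^p)\end{bmatrix}=n+mL$. 3) If $T_1=\dots=T_{\bar p}=T_0$ and $\{u_i^{[0,T_i-1]}\}_{i=1}^p$ are HCPE of order $L+n$ (cumulative part $u_1,\dots,u_{\bar p}$, mosaic part $u_{\bar p+1},\dots,u_p$), then $\operatorname{rank}\begin{bmatrix}H_1^{hyb}(\{x_i^{[0,T_i-L]}\}_{i=1}^p)\\ H_L^{hyb}(\{u_i^{[0,T_i-1]}\}_{i=1}^p)\end{bmat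rix}=n+mL$.
   Context: For a sequence $z^{[a,b]}=(z(a),\dots,z(b))$ with $z(k)\in\mathbb{R}^q$ and $L\le b-a+1$, the block Hankel matrix $H_L(z^{[a,b]})\in\mathbb{R}^{qL\times(b-a-L+2)}$ has $(r,c)$ block entry $z(a+r+c)$. With nonzero weights $\alpha_i$: $H_L^{mos}(\{z_i^{[a,b_i]}\}_{i=1}^p)=[\alpha_1H_L(z_1^{[a,b_1]})\ \cdots\ \alpha_pH_L(z_p^{[a,b_p]})]$; for equal-length sequences $H_L^{cum}(\{z_i^{[a,b]}\}_{i=1}^p)=\sum_i\alpha_iH_L(z_i^{[a,b]})$; and $H_L^{hyb}(\{z_i\}_{i=1}^p)=[H_L^{cum}(\{z_i\}_{i=1}^{\bar p})\ \ H_L^{mos}(\{z_i\}_{i=\bar p+1}^p)]$ where $z_1,\dots,z_{\bar p}$ have equal lengths. Signals $u_i\in\mathbb{R}^m$ are MCPE (resp. CCPE, HCPE) of order $K$ if $H_K^{mos}$ (resp. $H_K^{cum}$, $H_K^{hyb}$) of the sequences has full row rank $mK$ for every choice of nonzero weights $\alpha_i$. *)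

theory Defs
  imports "Jordan_Normal_Form.DL_Rank"
begin

definition mrank :: "real mat \<Rightarrow> nat" where
  "mrank M = vec_space.rank (dim_row M) M"

fun hcat :: "nat \<Rightarrow> real mat list \<Rightarrow> real mat" where
  "hcat r [] = 0\<^sub>m r 0"
| "hcat r (M # Ms) =
     (let N = hcat r Ms in
      mat r (dim_col M + dim_col N)
        (\<lambda>(i, j). if j < dim_col M then M $$ (i, j) else N $$ (i, j - dim_col M)))"

(* Block Hankel matrix H_L(z^{[a,b]}) in R^{qL x (b-a-L+2)}, z(k) in R^q,
   whose (r,c) block entry is z(a+r+c). *)
definition hankel :: "nat \<Rightarrow> nat \<Rightarrow> (nat \<Rightarrow> real vec) \<Rightarrow> nat \<Rightarrow> nat \<Rightarrow> real mat" where
  "hankel q L z a b = mat (q * L) (b + 2 - a - L) (\<lambda>(r, c). z (a + r div q + c) $ (r mod q))"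

definition hankel_mos :: "nat \<Rightarrow> nat \<Rightarrow> (nat \<Rightarrow> nat \<Rightarrow> real vec) \<Rightarrow> nat \<Rightarrow> (nat \<Rightarrow> nat)
    \<Rightarrow> (nat \<Rightarrow> real) \<Rightarrow> nat \<Rightarrow> nat \<Rightarrow> real mat" where
  "hankel_mos q L z a b \<alpha> lo hi =
     hcat (q * L) (map (\<lambda>i. \<alpha> i \<cdot>\<^sub>m hankel q L (z i) a (b i)) [lo..<Suc hi])"

definition hankel_cum :: "nat \<Rightarrow> nat \<Rightarrow> (nat \<Rightarrow> nat \<Rightarrow> real vec) \<Rightarrow> nat \<Rightarrow> nat
    \<Rightarrow> (nat \<Rightarrow> real) \<Rightarrow> nat \<Rightarrow> nat \<Rightarrow> real mat" where
  "hankel_cum q L z a b \<alpha> lo hi =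
     mat (q * L) (b + 2 - a - L)
       (\<lambda>(r, c). \<Sum>i\<in>{lo..hi}. \<alpha> i * hankel q L (z i) a b $$ (r, c))"

(* Hybrid Hankel: [H^cum(z_1..z_pbar) H^mos(z_{pbar+1}..z_p)];
   b0 is the common end index of z_1..z_pbar, b i the end index of z_i for i > pbar. *)
definition hankel_hyb :: "nat \<Rightarrow> nat \<Rightarrow> (nat \<Rightarrow> nat \<Rightarrow> real vec) \<Rightarrow> nat \<Rightarrow> nat \<Rightarrow> (nat \<Rightarrow> nat)
    \<Rightarrow> (nat \<Rightarrow> real) \<Rightarrow> nat \<Rightarrow> nat \<Rightarrow> real mat" where
  "hankel_hyb q L z a b0 b \<alpha> pbar p =
     hcat (q * L) [hankel_cum q L z a b0 \<alpha> 1 pbar, hankel_mos q L z a b \<alpha> (Suc pbar) p]"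

(* Persistency of excitation notions for signals u_i^{[0,T_i-1]}, u_i(k) in R^m, i = 1..p.
   The length requirement K <= T_i is the well-definedness condition of the Hankel matrices. *)
definition MCPE :: "nat \<Rightarrow> nat \<Rightarrow> (nat \<Rightarrow> nat \<Rightarrow> real vec) \<Rightarrow> (nat \<Rightarrow> nat) \<Rightarrow> nat \<Rightarrow> bool" where
  "MCPE m K u T p \<longleftrightarrow> (\<forall>i\<in>{1..p}. K \<le> T i) \<and>
     (\<forall>\<alpha>. (\<forall>i\<in>{1..p}. \<alpha> i \<noteq> 0) \<longrightarrow>
        mrank (hankel_mos m K u 0 (\<lambda>i. T i - 1) \<alpha> 1 p) = m * K)"

definition CCPE :: "nat \<Rightarrow> nat \<Rightarrow> (nat \<Rightarrow> nat \<Rightarrow> real vec) \<Rightarrow> nat \<Rightarrow> nat \<Rightarrow> bool" where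
  "CCPE m K u T0 p \<longleftrightarrow> K \<le> T0 \<and>
     (\<forall>\<alpha>. (\<forall>i\<in>{1..p}. \<alpha> i \<noteq> 0) \<longrightarrow>
        mrank (hankel_cum m K u 0 (T0 - 1) \<alpha> 1 p) = m * K)"

(* cumulative part u_1..u_pbar of common length T0, mosaic part u_{pbar+1}..u_p of lengths T i *)
definition HCPE :: "nat \<Rightarrow> nat \<Rightarrow> (nat \<Rightarrow> nat \<Rightarrow> real vec) \<Rightarrow> nat \<Rightarrow> (nat \<Rightarrow> nat)
    \<Rightarrow> nat \<Rightarrow> nat \<Rightarrow> bool" where
  "HCPE m K u T0 T pbar p \<longleftrightarrow> K \<le> T0 \<and> (\<forall>i\<in>{Suc pbar..p}. K \<le> T i) \<and>
     (\<forall>\<alpha>. (\<forall>i\<in>{1..p}. \<alpha> i \<noteq> 0) \<longrightarrow>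
        mrank (hankel_hyb m K u 0 (T0 - 1) (\<lambda>i. T i - 1) \<alpha> pbar p) = m * K)"

definition controllable :: "nat \<Rightarrow> real mat \<Rightarrow> real mat \<Rightarrow> bool" where
  "controllable n A B \<longleftrightarrow> mrank (hcat n (map (\<lambda>k. (A ^\<^sub>m k) * B) [0..<n])) = n"

end

theory Submission
  imports Defs
begin

text \<open>
  A matrix with \<open>r\<close> rows has rank \<open>r\<close> iff no nonzero vector of length \<open>r\<close> is orthogonal
  to all of its columns. Up to nonzero factors, the columns of the mosaic, cumulative and hybrid
  Hankel matrices are windows of trajectories of the system: of the individual trajectories in the
  mosaic part, and of their weighted sum (again a trajectory, by linearity) in the cumulative part.
  So all three claims reduce to Willems' fundamental lemma for a family of trajectories.

  For that, let \<open>(\<xi>, \<eta>)\<close> be orthogonal to every state-input window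
  \<open>(x c, u c, ..., u (c + L - 1))\<close>. Expanding \<open>x (c + k)\<close> through the dynamics for
  \<open>k \<le> d\<close> and combining the resulting relations with the coefficients \<open>a\<close> of a nonzero
  polynomial of degree \<open>d \<le> n\<close> with \<open>\<xi>\<^sup>T a(A) = 0\<close> gives a vector orthogonal to all input
  windows of depth \<open>L + n\<close>, which vanishes by persistency of excitation. Its blocks form the
  convolution \<open>a * h\<close>, where \<open>h\<close> is \<open>\<eta>\<close> at the times \<open>0..L-1\<close>, the Markov parameter
  \<open>\<xi>\<^sup>T A\<^sup>l B\<close> at time \<open>-l-1\<close>, and \<open>0\<close> from time \<open>L\<close> on. As \<open>a * h\<close> vanishes
  everywhere and \<open>h\<close> vanishes eventually, \<open>h = 0\<close>: thus \<open>\<eta> = 0\<close>, and \<open>\<xi>\<close> is orthogonal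
  to the columns of the controllability matrix, so \<open>\<xi> = 0\<close>.
\<close>

section \<open>Rank and orthogonal complements\<close>

abbreviation orth_compl :: "nat \<Rightarrow> real vec set \<Rightarrow> real vec set" where
  "orth_compl r W \<equiv> vec_module.orthogonal_complement r W"

lemma self_scalar_prod_eq_0_iff:
  fixes v :: "real vec"
  assumes "v \<in> carrier_vec n"
  shows "v \<bullet> v = 0 \<longleftrightarrow> v = 0\<^sub>v n"
  using conjugate_square_eq_0_vec[OF assms] by simp

lemma (in vec_space) mult_mat_vec_in_span_cols:
  assumes A: "A \<in> carrier_mat n nc" and w: "w \<in> carrier_vec nc"
  shows "A *\<^sub>v w \<in> span (set (cols A))"
proof -
  have cs: "set (cols A) \<subseteq> carrier_vec n" using A cols_dim by blast
  have "A *\<^sub>v w = lincomb_list (\<lambda>i. w $ i) (cols A)"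
  proof (subst lincomb_list_as_mat_mult)
    show "\<forall>v\<in>set (cols A). dim_vec v = n" using cs by auto
    have "vec (length (cols A)) (($) w) = w" using A w by auto
    thus "A *\<^sub>v w = mat_of_cols n (cols A) *\<^sub>v vec (length (cols A)) (($) w)"
      using A mat_of_cols_cols[of A] by simp
  qed
  also have "\<dots> \<in> span_list (cols A)" by (rule in_span_listI, auto)
  finally show ?thesis using span_list_as_span[OF cs] by simp
qed

lemma (in vec_space) span_cols_eq_carrier_iff_rank:
  assumes A: "A \<in> carrier_mat n nc"
  shows "span (set (cols A)) = carrier_vec n \<longleftrightarrow> rank A = n"
proof
  assume sp: "span (set (cols A)) = carrier_vec n"
  have "rank A = vectorspace.dim class_ring (V\<lparr>carrier := carrier_vec n\<rparr>)"
    unfolding rank_def sp by simp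
  also have "V\<lparr>carrier := carrier_vec n\<rparr> = V" by (simp add: module_vec_def)
  finally show "rank A = n" using dim_is_n by simp
next
  assume r: "rank A = n"
  have cs: "set (cols A) \<subseteq> carrier_vec n" using A cols_dim by blast
  obtain S where S: "maximal S (\<lambda>T. T \<subseteq> set (cols A) \<and> lin_indpt T)"
    using maximal_exists[of "\<lambda>T. T \<subseteq> set (cols A) \<and> lin_indpt T" "card (set (cols A))" "{}"]
    by (meson List.finite_set card_mono empty_iff empty_subsetI finite_lin_indpt2 rev_finite_subset)
  have SA: "S \<subseteq> set (cols A)" "lin_indpt S" using S unfolding maximal_def by auto
  have "card S = n" using rank_card_indpt[OF A S] r by simp
  hence "basis S"
    using SA cs dim_is_n finite_subset[OF SA(1)] by (intro dim_li_is_basis) auto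
  hence "span S = carrier_vec n" unfolding basis_def by auto
  thus "span (set (cols A)) = carrier_vec n"
    using span_is_monotone[OF SA(1)] span_closed[OF cs] by auto
qed

lemma orth_compl_cols_eq_0_if_mrank:
  fixes M :: "real mat"
  assumes M: "M \<in> carrier_mat r c" and rk: "mrank M = r"
  shows "orth_compl r (set (cols M)) = {0\<^sub>v r}"
proof -
  interpret vs: vec_space "TYPE(real)" r .
  have cs: "set (cols M) \<subseteq> carrier_vec r" using M cols_dim by blast
  have sp: "vs.span (set (cols M)) = carrier_vec r"
    using vs.span_cols_eq_carrier_iff_rank[OF M] rk M unfolding mrank_def by simp
  have "v = 0\<^sub>v r" if v: "v \<in> orth_compl r (set (cols M))" for v
  proof -
    have "v \<in> orth_compl r (carrier_vec r)"
      using v vs.in_orthogonal_complement_span[OF cs] sp by simp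
    hence "v \<bullet> v = 0" and "v \<in> carrier_vec r" by (auto simp: vs.orthogonal_complement_def)
    thus ?thesis using self_scalar_prod_eq_0_iff by blast
  qed
  moreover have "0\<^sub>v r \<in> orth_compl r (set (cols M))"
    using cs by (auto simp: vs.orthogonal_complement_def)
  ultimately show ?thesis by blast
qed

lemma mrank_if_orth_compl_cols_eq_0:
  fixes M :: "real mat"
  assumes M: "M \<in> carrier_mat r c" and oc: "orth_compl r (set (cols M)) = {0\<^sub>v r}"
  shows "mrank M = r"
proof -
  interpret vs: vec_space "TYPE(real)" r .
  have cs: "set (cols M) \<subseteq> carrier_vec r" using M cols_dim by blast
  \<comment> \<open>The Gram matrix \<open>M M\<^sup>T\<close> is regular, and its columns lie in the column span of \<open>M\<close>.\<close>
  define G where "G = M * transpose_mat M"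
  have G: "G \<in> carrier_mat r r" using M unfolding G_def by auto
  have "v = 0\<^sub>v r" if v: "v \<in> carrier_vec r" and Gv: "G *\<^sub>v v = 0\<^sub>v r" for v
  proof -
    define y where "y = transpose_mat M *\<^sub>v v"
    have y: "y \<in> carrier_vec c" using M v unfolding y_def by auto
    have "y \<bullet> y = v \<bullet> (M *\<^sub>v y)"
      unfolding y_def using M v by (intro transpose_vec_mult_scalar) auto
    also have "M *\<^sub>v y = G *\<^sub>v v" unfolding y_def G_def using M v by auto
    finally have "y = 0\<^sub>v c" using Gv v y self_scalar_prod_eq_0_iff by auto
    hence "v \<bullet> col M j = 0" if "j < c" for j
      using that M v comm_scalar_prod[OF v, of "col M j"] unfolding y_def
      by (metis carrier_matD col_dim index_mult_mat_vec index_transpose_mat(2) index_zero_vec(1) row_transpose)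
    hence "v \<in> orth_compl r (set (cols M))"
      using v M by (auto simp: vs.orthogonal_complement_def cols_def)
    thus ?thesis using oc by blast
  qed
  hence "vs.rank G = r"
    using det_0_iff_vec_prod_zero_field[OF G] vs.det_rank_iff[OF G] by auto
  hence spG: "vs.span (set (cols G)) = carrier_vec r"
    using vs.span_cols_eq_carrier_iff_rank[OF G] by simp
  have "set (cols G) \<subseteq> vs.span (set (cols M))"
  proof
    fix w assume "w \<in> set (cols G)"
    then obtain j where j: "j < r" "w = col G j" using G by (auto simp: cols_def)
    hence "w = M *\<^sub>v col (transpose_mat M) j" unfolding G_def using M by (simp add: mult_mat_vec_def)
    thus "w \<in> vs.span (set (cols M))"
      using vs.mult_mat_vec_in_span_cols[OF M] M j by simp
  qed
  hence "vs.span (set (cols G)) \<subseteq> vs.span (set (cols M))"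
    using vs.span_subsetI[OF cs] by blast
  hence "vs.span (set (cols M)) = carrier_vec r"
    using spG vs.span_closed[OF cs] by auto
  thus "mrank M = r" using vs.span_cols_eq_carrier_iff_rank[OF M] M unfolding mrank_def by simp
qed

lemma mrank_eq_dim_row_iff:
  "mrank M = dim_row M \<longleftrightarrow> orth_compl (dim_row M) (set (cols M)) = {0\<^sub>v (dim_row M)}"
  using orth_compl_cols_eq_0_if_mrank mrank_if_orth_compl_cols_eq_0
  by (metis carrier_mat_triv)

section \<open>Windows and the columns of Hankel matrices\<close>

lemma sum_lessThan_mult_blocks: "(\<Sum>r<K * q. f r) = (\<Sum>s<K. \<Sum>i<q. f (s * q + i :: nat))"
proof -
  have "(\<Sum>r<K * q. f r) = (\<Sum>s<K. sum f {s * q..<s * q + q})"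
    using sum.nat_group[of f q K] by simp
  also have "\<dots> = (\<Sum>s<K. \<Sum>i<q. f (s * q + i))"
    by (simp add: sum.atLeastLessThan_shift_0 atLeast0LessThan)
  finally show ?thesis .
qed

definition window :: "nat \<Rightarrow> nat \<Rightarrow> (nat \<Rightarrow> real vec) \<Rightarrow> nat \<Rightarrow> real vec" where
  "window q K z c = vec (q * K) (\<lambda>r. z (c + r div q) $ (r mod q))"

lemma window_carrier [simp]: "window q K z c \<in> carrier_vec (q * K)"
  unfolding window_def by simp

lemma window_depth_one: "z c \<in> carrier_vec q \<Longrightarrow> window q 1 z c = z c"
  unfolding window_def by auto

lemma scalar_prod_window:
  assumes "w \<in> carrier_vec (q * K)"
  shows "w \<bullet> window q K z c = (\<Sum>s<K. \<Sum>i<q. w $ (s * q + i) * z (c + s) $ i)"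
proof -
  have "w \<bullet> window q K z c = (\<Sum>r<K * q. w $ r * z (c + r div q) $ (r mod q))"
    using assms by (simp add: window_def scalar_prod_def lessThan_atLeast0 mult.commute)
  also have "\<dots> = (\<Sum>s<K. \<Sum>i<q. w $ (s * q + i) * z (c + s) $ i)"
    unfolding sum_lessThan_mult_blocks by (intro sum.cong refl) auto
  finally show ?thesis .
qed

lemma set_cols: "set (cols M) = col M ` {..<dim_col M}"
  by (auto simp: cols_def)

lemma dim_hankel [simp]:
  "dim_row (hankel q K z a b) = q * K" "dim_col (hankel q K z a b) = b + 2 - a - K"
  by (simp_all add: hankel_def)
lemma col_hankel: "c < b + 2 - a - K \<Longrightarrow> col (hankel q K z a b) c = window q K z (a + c)"
  unfolding window_def by (rule eq_vecI) (simp_all add: hankel_def add.assoc add.commute[of c])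
lemma set_cols_hankel: "set (cols (hankel q K z a b)) = (\<lambda>c. window q K z (a + c)) ` {..<b + 2 - a - K}"
  unfolding set_cols by (intro image_cong) (simp_all add: col_hankel)

lemma set_cols_smult: "set (cols (\<alpha> \<cdot>\<^sub>m M)) = (\<lambda>w. \<alpha> \<cdot>\<^sub>v w) ` set (cols M)"
  unfolding set_cols by (auto simp: col_smult)

lemma dim_hcat [simp]:
  "dim_row (hcat r Ms) = r" "dim_col (hcat r Ms) = sum_list (map dim_col Ms)"
  by (induction Ms) (auto simp: Let_def)

lemma index_hcat_Cons:
  "i < r \<Longrightarrow> j < dim_col M + dim_col (hcat r Ms) \<Longrightarrow>
   hcat r (M # Ms) $$ (i, j) = (if j < dim_col M then M $$ (i, j) else hcat r Ms $$ (i, j - dim_col M))"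
  by (simp add: Let_def del: dim_hcat)

lemma lessThan_add_split:
  "{..<a + b} = {..<a} \<union> (\<lambda>j. a + j) ` {..<b::nat}"
proof -
  have "{..<a + b} = {..<a} \<union> {a..<a + b}" by auto
  also have "{a..<a + b} = (\<lambda>j. a + j) ` {..<b}"
    using atLeast0LessThan image_add_atLeastLessThan[of a 0 b] by (simp add: add.commute)
  finally show ?thesis .
qed

lemma set_cols_hcat:
  assumes "\<forall>M\<in>set Ms. dim_row M = r"
  shows "set (cols (hcat r Ms)) = (\<Union>M\<in>set Ms. set (cols M))"
  using assms
proof (induction Ms)
  case (Cons M Ms)
  let ?N = "hcat r Ms"
  have "col (hcat r (M # Ms)) j = col M j" if "j < dim_col M" for j
    using that Cons.prems by (intro eq_vecI) (simp_all add: index_hcat_Cons del: hcat.simps(2))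
  moreover have "col (hcat r (M # Ms)) (dim_col M + j) = col ?N j" if "j < dim_col ?N" for j
    using that by (intro eq_vecI) (simp_all add: index_hcat_Cons del: hcat.simps(2))
  ultimately have "set (cols (hcat r (M # Ms))) = set (cols M) \<union> set (cols ?N)"
    unfolding set_cols
    by (simp add: lessThan_add_split image_Un image_image del: hcat.simps(2))
  thus ?case using Cons by (simp del: hcat.simps(2))
qed (simp add: set_cols)

lemma index_append_rows:
  "i < dim_row X + dim_row U \<Longrightarrow> j < dim_col X \<Longrightarrow>
   (X @\<^sub>r U) $$ (i, j) = (if i < dim_row X then X $$ (i, j) else U $$ (i - dim_row X, j))"
  by (simp add: append_rows_def)

lemma dim_append_rows [simp]:
  "dim_row (X @\<^sub>r U) = dim_row X + dim_row U" "dim_col (X @\<^sub>r U) = dim_col X"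
  by (simp_all add: append_rows_def)

lemma hcat_append_rows:
  assumes "list_all2 (\<lambda>X U. dim_row X = r1 \<and> dim_row U = r2 \<and> dim_col X = dim_col U) Xs Us"
  shows "hcat r1 Xs @\<^sub>r hcat r2 Us = hcat (r1 + r2) (map2 (@\<^sub>r) Xs Us)"
  using assms
proof (induction rule: list_all2_induct)
  case Nil thus ?case by (auto simp: append_rows_def)
next
  case (Cons X Xs U Us)
  let ?X = "hcat r1 Xs" and ?U = "hcat r2 Us" and ?H = "hcat (r1 + r2) (map2 (@\<^sub>r) Xs Us)"
  have dims: "dim_row X = r1" "dim_row U = r2" "dim_col U = dim_col X" using Cons.hyps by auto
  have dcU: "dim_col ?U = dim_col ?X"
    using Cons(2) by (induction rule: list_all2_induct) auto
  hence dcX: "dim_col ?H = dim_col ?X" "dim_col ?U = dim_col ?X"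
    using Cons.IH[symmetric] by (simp_all del: dim_hcat)
  show ?case
  proof (rule eq_matI)
    fix i j
    assume "i < dim_row (hcat (r1 + r2) (map2 (@\<^sub>r) (X # Xs) (U # Us)))"
      and "j < dim_col (hcat (r1 + r2) (map2 (@\<^sub>r) (X # Xs) (U # Us)))"
    hence i: "i < r1 + r2" and j: "j < dim_col X + dim_col ?X"
      using dcX by (simp_all del: dim_hcat add: Let_def)
    have "(hcat r1 (X # Xs) @\<^sub>r hcat r2 (U # Us)) $$ (i, j)
      = (if i < r1 then hcat r1 (X # Xs) $$ (i, j) else hcat r2 (U # Us) $$ (i - r1, j))"
      using i j by (subst index_append_rows) (simp_all del: dim_hcat add: Let_def)
    also have "\<dots> = (if j < dim_col X then (X @\<^sub>r U) $$ (i, j) else (?X @\<^sub>r ?U) $$ (i, j - dim_col X))"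
      using i j dims dcX by (simp del: dim_hcat(2) hcat.simps(2) add: index_hcat_Cons index_append_rows)
    also have "\<dots> = hcat (r1 + r2) (map2 (@\<^sub>r) (X # Xs) (U # Us)) $$ (i, j)"
      using i j dims dcX Cons.IH by (simp del: dim_hcat(2) hcat.simps(2) add: index_hcat_Cons)
    finally show "(hcat r1 (X # Xs) @\<^sub>r hcat r2 (U # Us)) $$ (i, j)
      = hcat (r1 + r2) (map2 (@\<^sub>r) (X # Xs) (U # Us)) $$ (i, j)" .
  qed (use dims dcX in \<open>simp_all del: dim_hcat add: Let_def\<close>)
qed

lemma smult_append_rows: "dim_col X = dim_col U \<Longrightarrow> \<alpha> \<cdot>\<^sub>m X @\<^sub>r \<alpha> \<cdot>\<^sub>m U = \<alpha> \<cdot>\<^sub>m (X @\<^sub>r U)"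
  by (intro eq_matI) (auto simp: index_append_rows)

lemma set_cols_append_rows:
  assumes "dim_col U = dim_col X"
  shows "set (cols (X @\<^sub>r U)) = (\<lambda>j. col X j @\<^sub>v col U j) ` {..<dim_col X}"
  unfolding set_cols using assms
  by (intro image_cong refl eq_vecI) (auto simp: index_append_rows)

section \<open>Trajectories\<close>

definition trajectory :: "real mat \<Rightarrow> real mat \<Rightarrow> (nat \<Rightarrow> real vec) \<Rightarrow> (nat \<Rightarrow> real vec) \<Rightarrow> nat \<Rightarrow> bool" where
  "trajectory A B x u T \<longleftrightarrow>
     (\<forall>k<T. x k \<in> carrier_vec (dim_row A) \<and> u k \<in> carrier_vec (dim_col B)) \<and>
     (\<forall>k. k + 1 < T \<longrightarrow> x (k + 1) = A *\<^sub>v x k + B *\<^sub>v u k)"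

lemma pow_mat_add:
  assumes "A \<in> carrier_mat n n"
  shows "A ^\<^sub>m (i + j) = A ^\<^sub>m i * A ^\<^sub>m j"
  using assms by (induction j) (auto simp: assoc_mult_mat[of _ n n _ n _ n])

lemma scalar_prod_mult_mat_vec:
  assumes "M \<in> carrier_mat n m" and "\<xi> \<in> carrier_vec n" and "y \<in> carrier_vec m"
  shows "\<xi> \<bullet> (M *\<^sub>v y) = (\<Sum>i<m. (\<xi> \<bullet> col M i) * y $ i)"
proof -
  have "\<xi> \<bullet> (M *\<^sub>v y) = (\<Sum>r<n. \<Sum>i<m. \<xi> $ r * (M $$ (r, i) * y $ i))"
    using assms by (simp add: scalar_prod_def atLeast0LessThan sum_distrib_left)
  also have "\<dots> = (\<Sum>i<m. \<Sum>r<n. \<xi> $ r * (M $$ (r, i) * y $ i))"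
    by (rule sum.swap)
  also have "\<dots> = (\<Sum>i<m. (\<xi> \<bullet> col M i) * y $ i)"
    using assms by (simp add: scalar_prod_def atLeast0LessThan sum_distrib_right ac_simps)
  finally show ?thesis .
qed

lemma trajectory_scalar_prod_pow_expand:
  assumes traj: "trajectory A B x u T" and A: "A \<in> carrier_mat n n" and B: "B \<in> carrier_mat n m"
    and \<xi>: "\<xi> \<in> carrier_vec n" and ck: "c + k < T"
  shows "\<xi> \<bullet> (A ^\<^sub>m j *\<^sub>v x (c + k)) = \<xi> \<bullet> (A ^\<^sub>m (j + k) *\<^sub>v x c)
           + (\<Sum>s<k. \<xi> \<bullet> ((A ^\<^sub>m (j + k - 1 - s) * B) *\<^sub>v u (c + s)))"
  using ck
proof (induction k arbitrary: j)
  case (Suc k)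
  have x: "x (c + k) \<in> carrier_vec n" and u: "u (c + k) \<in> carrier_vec m"
    and step: "x (c + Suc k) = A *\<^sub>v x (c + k) + B *\<^sub>v u (c + k)"
    using traj A B Suc.prems unfolding trajectory_def by auto
  have Aj: "A ^\<^sub>m j \<in> carrier_mat n n" using A by simp
  have "A ^\<^sub>m j *\<^sub>v x (c + Suc k) = A ^\<^sub>m Suc j *\<^sub>v x (c + k) + (A ^\<^sub>m j * B) *\<^sub>v u (c + k)"
    using step A B x u Aj
    by (simp add: mult_add_distrib_mat_vec[OF Aj] assoc_mult_mat_vec[of _ n n _ n] assoc_mult_mat_vec[of _ n n _ m])
  moreover have "A ^\<^sub>m Suc j *\<^sub>v x (c + k) \<in> carrier_vec n" "(A ^\<^sub>m j * B) *\<^sub>v u (c + k) \<in> carrier_vec n"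
    using A B x u by (auto intro!: mult_mat_vec_carrier)
  ultimately have "\<xi> \<bullet> (A ^\<^sub>m j *\<^sub>v x (c + Suc k))
      = \<xi> \<bullet> (A ^\<^sub>m Suc j *\<^sub>v x (c + k)) + \<xi> \<bullet> ((A ^\<^sub>m j * B) *\<^sub>v u (c + k))"
    by (simp only: scalar_prod_add_distrib[OF \<xi>])
  also have "\<xi> \<bullet> (A ^\<^sub>m Suc j *\<^sub>v x (c + k)) = \<xi> \<bullet> (A ^\<^sub>m (Suc j + k) *\<^sub>v x c)
        + (\<Sum>s<k. \<xi> \<bullet> ((A ^\<^sub>m (Suc j + k - 1 - s) * B) *\<^sub>v u (c + s)))"
    using Suc.IH[of "Suc j"] Suc.prems by simp
  finally show ?case by (simp add: Suc_diff_le algebra_simps)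
qed simp

lemma trajectory_scalar_prod_expand:
  assumes traj: "trajectory A B x u T" and A: "A \<in> carrier_mat n n" and B: "B \<in> carrier_mat n m"
    and \<xi>: "\<xi> \<in> carrier_vec n" and ck: "c + k < T"
  shows "\<xi> \<bullet> x (c + k) = \<xi> \<bullet> (A ^\<^sub>m k *\<^sub>v x c)
           + (\<Sum>s<k. \<Sum>i<m. \<xi> \<bullet> (A ^\<^sub>m (k - 1 - s) *\<^sub>v col B i) * u (c + s) $ i)"
proof -
  have dims: "x k' \<in> carrier_vec n" "u k' \<in> carrier_vec m" if "k' < T" for k'
    using traj A B that unfolding trajectory_def by auto
  have "\<xi> \<bullet> ((A ^\<^sub>m l * B) *\<^sub>v u (c + s)) = (\<Sum>i<m. \<xi> \<bullet> (A ^\<^sub>m l *\<^sub>v col B i) * u (c + s) $ i)"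
    if "s < k" for s l
    using scalar_prod_mult_mat_vec[OF mult_carrier_mat[OF pow_carrier_mat[OF A] B] \<xi>, of "u (c + s)" l]
      dims(2)[of "c + s"] that ck
    by (simp add: col_mult2[OF pow_carrier_mat[OF A] B])
  with trajectory_scalar_prod_pow_expand[OF traj A B \<xi> ck, of 0] ck dims(1)[of "c + k"] A
  show ?thesis by simp
qed

lemma sum_shifted_window:
  fixes F :: "nat \<Rightarrow> int \<Rightarrow> real"
  assumes future: "\<And>s t. t \<ge> int L \<Longrightarrow> F s t = 0" and kL: "k + L \<le> N"
  shows "(\<Sum>s<N. F s (int s - int k)) = (\<Sum>s<k. F s (int s - int k)) + (\<Sum>b<L. F (k + b) (int b))"
proof -
  have "{..<N} = {..<k} \<union> {k..<N}" using kL by auto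
  hence "(\<Sum>s<N. F s (int s - int k)) = (\<Sum>s<k. F s (int s - int k)) + (\<Sum>s\<in>{k..<N}. F s (int s - int k))"
    by (simp add: sum.union_disjoint[symmetric] ivl_disj_int)
  also have "(\<Sum>s\<in>{k..<N}. F s (int s - int k)) = (\<Sum>b<N - k. F (k + b) (int b))"
    by (simp add: sum.atLeastLessThan_shift_0 atLeast0LessThan)
  also have "\<dots> = (\<Sum>b<L. F (k + b) (int b))"
    using kL future by (intro sum.mono_neutral_right) auto
  finally show ?thesis .
qed

lemma trajectory_shifted_window_relation:
  assumes traj: "trajectory A B x u T" and A: "A \<in> carrier_mat n n" and B: "B \<in> carrier_mat n m"
    and \<xi>: "\<xi> \<in> carrier_vec n" and L: "1 \<le> L"
    and rel: "\<And>c. c + L \<le> T \<Longrightarrow> \<xi> \<bullet> x c + (\<Sum>b<L. \<Sum>i<m. h i (int b) * u (c + b) $ i) = 0"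
    and past: "\<And>i l. i < m \<Longrightarrow> h i (- int l - 1) = \<xi> \<bullet> (A ^\<^sub>m l *\<^sub>v col B i)"
    and future: "\<And>i t. t \<ge> int L \<Longrightarrow> h i t = 0"
    and window: "c + k + L \<le> T" and kL: "k + L \<le> N"
  shows "\<xi> \<bullet> (A ^\<^sub>m k *\<^sub>v x c) + (\<Sum>s<N. \<Sum>i<m. h i (int s - int k) * u (c + s) $ i) = 0"
proof -
  have "h i (int s - int k) = \<xi> \<bullet> (A ^\<^sub>m (k - 1 - s) *\<^sub>v col B i)" if "s < k" "i < m" for s i
  proof -
    have "int s - int k = - int (k - 1 - s) - 1" using that(1) by simp
    thus ?thesis using past[OF that(2)] by (simp only:)
  qed
  hence "(\<Sum>s<k. \<Sum>i<m. h i (int s - int k) * u (c + s) $ i)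
      = (\<Sum>s<k. \<Sum>i<m. \<xi> \<bullet> (A ^\<^sub>m (k - 1 - s) *\<^sub>v col B i) * u (c + s) $ i)"
    by simp
  also have "\<dots> = \<xi> \<bullet> x (c + k) - \<xi> \<bullet> (A ^\<^sub>m k *\<^sub>v x c)"
    using trajectory_scalar_prod_expand[OF traj A B \<xi>, of c k] window L by simp
  finally have "\<xi> \<bullet> (A ^\<^sub>m k *\<^sub>v x c) + (\<Sum>s<k. \<Sum>i<m. h i (int s - int k) * u (c + s) $ i)
      + (\<Sum>b<L. \<Sum>i<m. h i (int b) * u (c + k + b) $ i) = 0"
    using rel[of "c + k"] window by simp
  moreover have "(\<Sum>s<N. \<Sum>i<m. h i (int s - int k) * u (c + s) $ i)
      = (\<Sum>s<k. \<Sum>i<m. h i (int s - int k) * u (c + s) $ i)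
        + (\<Sum>b<L. \<Sum>i<m. h i (int b) * u (c + (k + b)) $ i)"
    by (rule sum_shifted_window[OF _ kL]) (simp add: future)
  ultimately show ?thesis by (simp add: add.assoc)
qed

section \<open>Willems' fundamental lemma for windows\<close>

lemma convolution_eq_0_imp_eq_0:
  fixes a :: "nat \<Rightarrow> real" and h :: "int \<Rightarrow> real"
  assumes ad: "a d \<noteq> 0" and future: "\<And>t. t \<ge> t\<^sub>0 \<Longrightarrow> h t = 0"
    and conv: "\<And>s. (\<Sum>k\<le>d. a k * h (s - int k)) = 0"
  shows "h t = 0"
proof (induction "nat (t\<^sub>0 - t)" arbitrary: t rule: less_induct)
  case less
  show ?case
  proof (cases "t \<ge> t\<^sub>0")
    case False
    \<comment> \<open>The top coefficient expresses \<open>h t\<close> through values of \<open>h\<close> further to the right.\<close>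
    have "a d * h t + (\<Sum>k<d. a k * h (t + int d - int k)) = 0"
      using conv[of "t + int d"] by (simp add: lessThan_Suc_atMost[symmetric] add.commute)
    moreover have "h (t + int d - int k) = 0" if "k < d" for k
      using less[of "t + int d - int k"] False that by auto
    ultimately show ?thesis using ad by simp
  qed (use future in auto)
qed

lemma lin_dep_Suc_dim:
  fixes f :: "nat \<Rightarrow> real vec"
  assumes f: "\<And>k. k \<le> n \<Longrightarrow> f k \<in> carrier_vec n"
  obtains a where "\<exists>k\<le>n. a k \<noteq> 0" and "\<And>i. i < n \<Longrightarrow> (\<Sum>k\<le>n. a k * f k $ i) = 0"
proof -
  \<comment> \<open>The vectors are the columns of a square matrix whose last row is zero.\<close>
  define P where "P = mat\<^sub>r (Suc n) (Suc n) (\<lambda>i. if i = n then 0\<^sub>v (Suc n) else vec (Suc n) (\<lambda>k. f k $ i))"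
  have P: "P \<in> carrier_mat (Suc n) (Suc n)" unfolding P_def by simp
  have "det P = 0" unfolding P_def by (rule det_row_0) simp_all
  then obtain v where v: "v \<in> carrier_vec (Suc n)" "v \<noteq> 0\<^sub>v (Suc n)" "P *\<^sub>v v = 0\<^sub>v (Suc n)"
    using det_0_iff_vec_prod_zero_field[OF P] by auto
  show ?thesis
  proof
    show "\<exists>k\<le>n. v $ k \<noteq> 0"
      using v(1,2) by (metis eq_vecI index_zero_vec carrier_vecD less_Suc_eq_le)
    fix i assume i: "i < n"
    have "0 = (P *\<^sub>v v) $ i" using v(3) i by simp
    also have "\<dots> = (\<Sum>k<Suc n. f k $ i * v $ k)"
      using P i v(1) by (simp add: P_def scalar_prod_def atLeast0LessThan)
    finally show "(\<Sum>k\<le>n. v $ k * f k $ i) = 0"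
      by (simp add: lessThan_Suc_atMost mult.commute)
  qed
qed

lemma left_annihilating_poly_exists:
  fixes A :: "real mat"
  assumes A: "A \<in> carrier_mat n n" and \<xi>: "\<xi> \<in> carrier_vec n"
  obtains d a where "d \<le> n" and "a d \<noteq> 0"
    and "\<And>z. z \<in> carrier_vec n \<Longrightarrow> (\<Sum>k\<le>d. a k * (\<xi> \<bullet> (A ^\<^sub>m k *\<^sub>v z))) = 0"
proof -
  define f where "f k = transpose_mat (A ^\<^sub>m k) *\<^sub>v \<xi>" for k
  have f: "f k \<in> carrier_vec n" for k
    unfolding f_def using A \<xi> by (meson mult_mat_vec_carrier pow_carrier_mat transpose_carrier_mat)
  obtain a where a: "\<exists>k\<le>n. a k \<noteq> 0" and rel: "\<And>i. i < n \<Longrightarrow> (\<Sum>k\<le>n. a k * f k $ i) = 0"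
    using lin_dep_Suc_dim[of n f] f by metis
  have ann: "(\<Sum>k\<le>n. a k * (\<xi> \<bullet> (A ^\<^sub>m k *\<^sub>v z))) = 0" if z: "z \<in> carrier_vec n" for z
  proof -
    have "\<xi> \<bullet> (A ^\<^sub>m k *\<^sub>v z) = (\<Sum>i<n. f k $ i * z $ i)" for k
    proof -
      have "\<xi> \<bullet> (A ^\<^sub>m k *\<^sub>v z) = f k \<bullet> z"
        unfolding f_def by (rule transpose_vec_mult_scalar[symmetric, of _ n n]) (use A z \<xi> in auto)
      also have "\<dots> = (\<Sum>i<n. f k $ i * z $ i)"
        using z unfolding scalar_prod_def by (simp add: atLeast0LessThan)
      finally show ?thesis .
    qed
    hence "(\<Sum>k\<le>n. a k * (\<xi> \<bullet> (A ^\<^sub>m k *\<^sub>v z))) = (\<Sum>k\<le>n. \<Sum>i<n. a k * f k $ i * z $ i)"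
      by (simp add: sum_distrib_left mult.assoc)
    also have "\<dots> = (\<Sum>i<n. (\<Sum>k\<le>n. a k * f k $ i) * z $ i)"
      by (subst sum.swap) (simp add: sum_distrib_right)
    finally show ?thesis using rel by simp
  qed
  define D where "D = {k. k \<le> n \<and> a k \<noteq> 0}"
  have D: "finite D" "D \<noteq> {}" unfolding D_def using a by auto
  define d where "d = Max D"
  have d: "d \<le> n" "a d \<noteq> 0" using Max_in[OF D] unfolding d_def D_def by auto
  have d_max: "k \<le> d" if "k \<le> n" "a k \<noteq> 0" for k
    using Max_ge[OF D(1)] that unfolding d_def D_def by auto
  show ?thesis
  proof (rule that[of d a, OF d])
    fix z :: "real vec" assume "z \<in> carrier_vec n"
    moreover have "(\<Sum>k\<le>d. a k * (\<xi> \<bullet> (A ^\<^sub>m k *\<^sub>v z))) = (\<Sum>k\<le>n. a k * (\<xi> \<bullet> (A ^\<^sub>m k *\<^sub>v z)))"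
      using d(1) d_max by (intro sum.mono_neutral_left) (auto simp: not_le)
    ultimately show "(\<Sum>k\<le>d. a k * (\<xi> \<bullet> (A ^\<^sub>m k *\<^sub>v z))) = 0" using ann by simp
  qed
qed

lemma controllable_orth_imp_eq_0:
  assumes A: "A \<in> carrier_mat n n" and B: "B \<in> carrier_mat n m" and ctrb: "controllable n A B"
    and \<xi>: "\<xi> \<in> carrier_vec n" and orth: "\<And>l i. l < n \<Longrightarrow> i < m \<Longrightarrow> \<xi> \<bullet> (A ^\<^sub>m l *\<^sub>v col B i) = 0"
  shows "\<xi> = 0\<^sub>v n"
proof -
  define C where "C = hcat n (map (\<lambda>l. A ^\<^sub>m l * B) [0..<n])"
  have "set (cols C) = (\<Union>l<n. set (cols (A ^\<^sub>m l * B)))"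
    unfolding C_def using A B by (subst set_cols_hcat) (auto simp: atLeast0LessThan)
  hence "\<xi> \<in> orth_compl n (set (cols C))"
    using A B \<xi> orth
    by (auto simp: vec_module.orthogonal_complement_def set_cols col_mult2[OF pow_carrier_mat[OF A] B])
  thus ?thesis
    using ctrb mrank_eq_dim_row_iff[of C] unfolding controllable_def C_def by simp
qed

text \<open>A trajectory is represented by the triple of its state signal, input signal and length.\<close>

definition input_windows ::
  "nat \<Rightarrow> nat \<Rightarrow> ((nat \<Rightarrow> real vec) \<times> (nat \<Rightarrow> real vec) \<times> nat) set \<Rightarrow> real vec set" where
  "input_windows m K S = (\<Union>(x, u, T)\<in>S. window m K u ` {c. c + K \<le> T})"

definition state_input_windows ::
  "nat \<Rightarrow> nat \<Rightarrow> nat \<Rightarrow> ((nat \<Rightarrow> real vec) \<times> (nat \<Rightarrow> real vec) \<times> nat) set \<Rightarrow> real vec set" where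
  "state_input_windows n m L S =
     (\<Union>(x, u, T)\<in>S. (\<lambda>c. window n 1 x c @\<^sub>v window m L u c) ` {c. c + L \<le> T})"

lemma input_windows_image:
  "input_windows m K ((\<lambda>i. (x i, u i, T i)) ` I) = (\<Union>i\<in>I. window m K (u i) ` {c. c + K \<le> T i})"
  by (auto simp: input_windows_def)

lemma state_input_windows_image:
  "state_input_windows n m L ((\<lambda>i. (x i, u i, T i)) ` I)
    = (\<Union>i\<in>I. (\<lambda>c. window n 1 (x i) c @\<^sub>v window m L (u i) c) ` {c. c + L \<le> T i})"
  by (auto simp: state_input_windows_def)

lemma input_windows_insert:
  "input_windows m K (insert (x, u, T) S) = window m K u ` {c. c + K \<le> T} \<union> input_windows m K S"
  by (simp add: input_windows_def)

lemma state_input_windows_insert: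
  "state_input_windows n m L (insert (x, u, T) S)
    = (\<lambda>c. window n 1 x c @\<^sub>v window m L u c) ` {c. c + L \<le> T} \<union> state_input_windows n m L S"
  by (simp add: state_input_windows_def)

lemma state_input_windows_subset: "state_input_windows n m L S \<subseteq> carrier_vec (n + m * L)"
  using window_carrier[of n 1] window_carrier[of m L]
  unfolding state_input_windows_def by (force intro: append_carrier_vec)

lemma block_index [simp]:
  fixes s i m K :: nat
  assumes "i < m"
  shows "(s * m + i) div m = s" and "(s * m + i) mod m = i" and "s < K \<Longrightarrow> s * m + i < m * K"
proof -
  show "(s * m + i) div m = s" using assms by auto
  show "(s * m + i) mod m = i" using assms by auto
  assume "s < K"
  hence "(s + 1) * m \<le> K * m" by (intro mult_le_mono1) simp
  moreover have "s * m + i < (s + 1) * m" using assms by simp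
  ultimately show "s * m + i < m * K" by (simp add: mult.commute)
qed

context
  fixes A B :: "real mat" and n m L :: nat
    and S :: "((nat \<Rightarrow> real vec) \<times> (nat \<Rightarrow> real vec) \<times> nat) set"
    and \<xi> :: "real vec" and h :: "nat \<Rightarrow> int \<Rightarrow> real"
  assumes A: "A \<in> carrier_mat n n" and B: "B \<in> carrier_mat n m" and L: "1 \<le> L"
    and traj: "\<And>x u T. (x, u, T) \<in> S \<Longrightarrow> trajectory A B x u T"
    and pe: "orth_compl (m * (L + n)) (input_windows m (L + n) S) = {0\<^sub>v (m * (L + n))}"
    and \<xi>: "\<xi> \<in> carrier_vec n"
    and rel: "\<And>x u T c. (x, u, T) \<in> S \<Longrightarrow> c + L \<le> T \<Longrightarrow>
                \<xi> \<bullet> x c + (\<Sum>b<L. \<Sum>i<m. h i (int b) * u (c + b) $ i) = 0"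
    and past: "\<And>i l. i < m \<Longrightarrow> h i (- int l - 1) = \<xi> \<bullet> (A ^\<^sub>m l *\<^sub>v col B i)"
    and future: "\<And>i t. t \<ge> int L \<Longrightarrow> h i t = 0"
begin

lemma convolution_vanishes_on_input_windows:
  assumes d: "d \<le> n" and ann: "\<And>z. z \<in> carrier_vec n \<Longrightarrow> (\<Sum>k\<le>d. a k * (\<xi> \<bullet> (A ^\<^sub>m k *\<^sub>v z))) = 0"
    and s: "s < L + n" and i: "i < m"
  shows "(\<Sum>k\<le>d. a k * h i (int s - int k)) = 0"
proof -
  define g where "g i s = (\<Sum>k\<le>d. a k * h i (int s - int k))" for i s
  define w where "w = vec (m * (L + n)) (\<lambda>r. g (r mod m) (r div m))"
  have "w \<bullet> y = 0" if y: "y \<in> input_windows m (L + n) S" for y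
  proof -
    obtain x u T c where xuT: "(x, u, T) \<in> S" and c: "c + (L + n) \<le> T" and y: "y = window m (L + n) u c"
      using y unfolding input_windows_def by blast
    have "w \<bullet> y = (\<Sum>s<L + n. \<Sum>i<m. g i s * u (c + s) $ i)"
      unfolding y by (simp add: scalar_prod_window w_def)
    also have "\<dots> = (\<Sum>s<L + n. \<Sum>i<m. \<Sum>k\<le>d. a k * (h i (int s - int k) * u (c + s) $ i))"
      by (simp add: g_def sum_distrib_right mult.assoc)
    also have "\<dots> = (\<Sum>s<L + n. \<Sum>k\<le>d. \<Sum>i<m. a k * (h i (int s - int k) * u (c + s) $ i))"
      by (rule sum.cong[OF refl], rule sum.swap)
    also have "\<dots> = (\<Sum>k\<le>d. \<Sum>s<L + n. \<Sum>i<m. a k * (h i (int s - int k) * u (c + s) $ i))"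
      by (rule sum.swap)
    also have "\<dots> = (\<Sum>k\<le>d. a k * (\<Sum>s<L + n. \<Sum>i<m. h i (int s - int k) * u (c + s) $ i))"
      by (simp add: sum_distrib_left)
    also have "\<dots> = (\<Sum>k\<le>d. a k * - (\<xi> \<bullet> (A ^\<^sub>m k *\<^sub>v x c)))"
    proof (intro sum.cong refl)
      fix k assume "k \<in> {..d}"
      hence "\<xi> \<bullet> (A ^\<^sub>m k *\<^sub>v x c) + (\<Sum>s<L + n. \<Sum>i<m. h i (int s - int k) * u (c + s) $ i) = 0"
        using trajectory_shifted_window_relation[where x = x and u = u and h = h,
            OF traj[OF xuT] A B \<xi> L rel[OF xuT] past future] c d
        by simp
      hence "(\<Sum>s<L + n. \<Sum>i<m. h i (int s - int k) * u (c + s) $ i) = - (\<xi> \<bullet> (A ^\<^sub>m k *\<^sub>v x c))"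
        by linarith
      thus "a k * (\<Sum>s<L + n. \<Sum>i<m. h i (int s - int k) * u (c + s) $ i)
          = a k * - (\<xi> \<bullet> (A ^\<^sub>m k *\<^sub>v x c))"
        by (rule arg_cong)
    qed
    also have "\<dots> = 0"
      using ann[of "x c"] traj[OF xuT] c A L
      by (simp add: sum_negf trajectory_def)
    finally show ?thesis .
  qed
  hence "w \<in> orth_compl (m * (L + n)) (input_windows m (L + n) S)"
    by (simp add: w_def vec_module.orthogonal_complement_def)
  hence "w $ (s * m + i) = 0" using pe s i by simp
  thus ?thesis using s i by (simp add: w_def g_def)
qed

lemma kernel_sequence_eq_0:
  assumes i: "i < m"
  shows "h i t = 0"
proof -
  obtain d a where d: "d \<le> n" "a d \<noteq> 0"
    and ann: "\<And>z. z \<in> carrier_vec n \<Longrightarrow> (\<Sum>k\<le>d. a k * (\<xi> \<bullet> (A ^\<^sub>m k *\<^sub>v z))) = 0"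
    using left_annihilating_poly_exists[OF A \<xi>] by blast
  have conv: "(\<Sum>k\<le>d. a k * h i (s - int k)) = 0" for s
  proof (cases "s < 0")
    case True
    \<comment> \<open>Left of the window, the convolution is the annihilating polynomial applied to \<open>A\<^sup>l B e\<^sub>i\<close>.\<close>
    define l where "l = nat (- s - 1)"
    have "h i (s - int k) = \<xi> \<bullet> (A ^\<^sub>m k *\<^sub>v (A ^\<^sub>m l *\<^sub>v col B i))" for k
    proof -
      have "s - int k = - int (k + l) - 1" using True unfolding l_def by simp
      hence "h i (s - int k) = \<xi> \<bullet> (A ^\<^sub>m (k + l) *\<^sub>v col B i)" using past[OF i] by (simp only:)
      also have "A ^\<^sub>m (k + l) *\<^sub>v col B i = A ^\<^sub>m k *\<^sub>v (A ^\<^sub>m l *\<^sub>v col B i)"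
        using A B i by (simp add: pow_mat_add[OF A] assoc_mult_mat_vec[of _ n n _ n])
      finally show ?thesis .
    qed
    moreover have "col B i \<in> carrier_vec n" using col_dim[of B i] B by simp
    hence "A ^\<^sub>m l *\<^sub>v col B i \<in> carrier_vec n" by (rule mult_mat_vec_carrier[OF pow_carrier_mat[OF A]])
    ultimately show ?thesis using ann by simp
  next
    case False
    then obtain s' where s: "s = int s'" by (metis nonneg_int_cases not_less)
    show ?thesis
    proof (cases "s' < L + n")
      case True
      with convolution_vanishes_on_input_windows[OF d(1) ann _ i] s show ?thesis by simp
    next
      case False
      thus ?thesis using future s d(1) by (intro sum.neutral) auto
    qed
  qed
  show ?thesis
    by (rule convolution_eq_0_imp_eq_0[of a d "int L" "h i"]) (use d(2) future conv in auto)
qed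

end

lemma orth_state_input_window:
  assumes v: "v \<in> orth_compl (n + m * L) (state_input_windows n m L S)"
    and xuT: "(x, u, T) \<in> S" and c: "c + L \<le> T" and x: "x c \<in> carrier_vec n"
  shows "vec_first v n \<bullet> x c + (\<Sum>b<L. \<Sum>i<m. vec_last v (m * L) $ (b * m + i) * u (c + b) $ i) = 0"
proof -
  have "v \<in> carrier_vec (n + m * L)" using v by (simp add: vec_module.orthogonal_complement_def)
  hence v_eq: "v = vec_first v n @\<^sub>v vec_last v (m * L)" by simp
  have "window n 1 x c @\<^sub>v window m L u c \<in> state_input_windows n m L S"
    using xuT c unfolding state_input_windows_def by blast
  hence "0 = v \<bullet> (window n 1 x c @\<^sub>v window m L u c)"
    using v by (simp add: vec_module.orthogonal_complement_def)
  also have "\<dots> = (vec_first v n @\<^sub>v vec_last v (m * L)) \<bullet> (x c @\<^sub>v window m L u c)"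
    by (subst v_eq) (simp only: window_depth_one[of x c n, OF x])
  also have "\<dots> = vec_first v n \<bullet> x c + vec_last v (m * L) \<bullet> window m L u c"
    by (rule scalar_prod_append[of _ n _ "m * L"]) (use x in auto)
  finally show ?thesis by (simp add: scalar_prod_window)
qed

theorem orth_compl_state_input_windows:
  assumes A: "A \<in> carrier_mat n n" and B: "B \<in> carrier_mat n m" and ctrb: "controllable n A B"
    and L: "1 \<le> L" and traj: "\<And>x u T. (x, u, T) \<in> S \<Longrightarrow> trajectory A B x u T"
    and pe: "orth_compl (m * (L + n)) (input_windows m (L + n) S) = {0\<^sub>v (m * (L + n))}"
  shows "orth_compl (n + m * L) (state_input_windows n m L S) = {0\<^sub>v (n + m * L)}"
proof -
  have "v = 0\<^sub>v (n + m * L)" if v: "v \<in> orth_compl (n + m * L) (state_input_windows n m L S)" for v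
  proof -
    define \<xi> where "\<xi> = vec_first v n"
    define \<eta> where "\<eta> = vec_last v (m * L)"
    have "v \<in> carrier_vec (n + m * L)" using v by (simp add: vec_module.orthogonal_complement_def)
    hence v_eq: "v = \<xi> @\<^sub>v \<eta>" and \<xi>: "\<xi> \<in> carrier_vec n" and \<eta>: "\<eta> \<in> carrier_vec (m * L)"
      unfolding \<xi>_def \<eta>_def by simp_all
    define h where "h i t = (if t < 0 then \<xi> \<bullet> (A ^\<^sub>m nat (- t - 1) *\<^sub>v col B i)
      else if t < int L then \<eta> $ (nat t * m + i) else 0)" for i t
    have rel: "\<xi> \<bullet> x c + (\<Sum>b<L. \<Sum>i<m. h i (int b) * u (c + b) $ i) = 0"
      if xuT: "(x, u, T) \<in> S" and c: "c + L \<le> T" for x u T c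
      using orth_state_input_window[OF v xuT c] traj[OF xuT] c L A
      by (simp add: h_def \<xi>_def \<eta>_def trajectory_def)
    have h0: "h i t = 0" if "i < m" for i t
      by (rule kernel_sequence_eq_0[where h = h])
        (fact A B L traj pe \<xi> rel that | simp add: h_def)+
    have "\<xi> = 0\<^sub>v n"
      using controllable_orth_imp_eq_0[OF A B ctrb \<xi>] h0[of _ "- int _ - 1"] by (simp add: h_def)
    moreover have "\<eta> = 0\<^sub>v (m * L)"
    proof (rule eq_vecI)
      fix r assume "r < dim_vec (0\<^sub>v (m * L))"
      hence r: "r < m * L" by simp
      hence "0 < m" by (cases m) auto
      hence "r mod m < m" and "r div m < L"
        using r by (simp_all add: less_mult_imp_div_less mult.commute)
      thus "\<eta> $ r = 0\<^sub>v (m * L) $ r"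
        using h0[of "r mod m" "int (r div m)"] r by (simp add: h_def)
    qed (use \<eta> in simp)
    ultimately show ?thesis using v_eq by (auto intro!: eq_vecI)
  qed
  moreover have "0\<^sub>v (n + m * L) \<in> orth_compl (n + m * L) (state_input_windows n m L S)"
    using state_input_windows_subset[of n m L S]
    unfolding vec_module.orthogonal_complement_def by (auto dest: subsetD)
  ultimately show ?thesis by blast
qed

section \<open>Mosaic, cumulative and hybrid Hankel matrices\<close>

lemma orth_compl_UN_smult:
  assumes "\<And>i. i \<in> I \<Longrightarrow> \<alpha> i \<noteq> 0" and "\<And>i. i \<in> I \<Longrightarrow> W i \<subseteq> carrier_vec r"
  shows "orth_compl r (\<Union>i\<in>I. (\<lambda>w. \<alpha> i \<cdot>\<^sub>v w) ` W i) = orth_compl r (\<Union>i\<in>I. W i)"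
  using assms by (auto simp: vec_module.orthogonal_complement_def subset_iff)

definition weighted_sum :: "nat \<Rightarrow> (nat \<Rightarrow> real) \<Rightarrow> nat set \<Rightarrow> (nat \<Rightarrow> nat \<Rightarrow> real vec) \<Rightarrow> nat \<Rightarrow> real vec" where
  "weighted_sum q \<alpha> I z k = vec q (\<lambda>j. \<Sum>i\<in>I. \<alpha> i * z i k $ j)"

lemma hankel_cum_eq_hankel:
  "hankel_cum q K z 0 b \<alpha> lo hi = hankel q K (weighted_sum q \<alpha> {lo..hi} z) 0 b"
proof (rule eq_matI)
  fix r c assume "r < dim_row (hankel q K (weighted_sum q \<alpha> {lo..hi} z) 0 b)"
    and "c < dim_col (hankel q K (weighted_sum q \<alpha> {lo..hi} z) 0 b)"
  moreover from this have "r mod q < q" by (cases q) auto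
  ultimately show "hankel_cum q K z 0 b \<alpha> lo hi $$ (r, c) = hankel q K (weighted_sum q \<alpha> {lo..hi} z) 0 b $$ (r, c)"
    by (simp add: hankel_cum_def hankel_def weighted_sum_def)
qed (simp_all add: hankel_cum_def)

lemma trajectory_weighted_sum:
  assumes A: "A \<in> carrier_mat n n" and B: "B \<in> carrier_mat n m"
    and traj: "\<And>i. i \<in> I \<Longrightarrow> trajectory A B (x i) (u i) T"
  shows "trajectory A B (weighted_sum n \<alpha> I x) (weighted_sum m \<alpha> I u) T"
  unfolding trajectory_def
proof (intro conjI allI impI)
  fix k assume k: "k + 1 < T"
  have x: "x i k \<in> carrier_vec n" and u: "u i k \<in> carrier_vec m"
    and step: "x i (k + 1) = A *\<^sub>v x i k + B *\<^sub>v u i k" if "i \<in> I" for i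
    using traj[OF that] k A B unfolding trajectory_def by auto
  show "weighted_sum n \<alpha> I x (k + 1) = A *\<^sub>v weighted_sum n \<alpha> I x k + B *\<^sub>v weighted_sum m \<alpha> I u k"
  proof (rule eq_vecI)
    fix j assume "j < dim_vec (A *\<^sub>v weighted_sum n \<alpha> I x k + B *\<^sub>v weighted_sum m \<alpha> I u k)"
    hence j: "j < n" using B by simp
    have "(\<Sum>i\<in>I. \<alpha> i * x i (k + 1) $ j)
        = (\<Sum>i\<in>I. \<alpha> i * ((\<Sum>l<n. A $$ (j, l) * x i k $ l) + (\<Sum>l<m. B $$ (j, l) * u i k $ l)))"
    proof (rule sum.cong[OF refl])
      fix i assume i: "i \<in> I"
      have "x i (k + 1) $ j = (A *\<^sub>v x i k + B *\<^sub>v u i k) $ j" using step[OF i] by simp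
      also have "\<dots> = (\<Sum>l<n. A $$ (j, l) * x i k $ l) + (\<Sum>l<m. B $$ (j, l) * u i k $ l)"
        using x[OF i] u[OF i] A B j by (simp add: scalar_prod_def atLeast0LessThan)
      finally show "\<alpha> i * x i (k + 1) $ j
          = \<alpha> i * ((\<Sum>l<n. A $$ (j, l) * x i k $ l) + (\<Sum>l<m. B $$ (j, l) * u i k $ l))"
        by simp
    qed
    also have "\<dots> = (\<Sum>l<n. A $$ (j, l) * (\<Sum>i\<in>I. \<alpha> i * x i k $ l))
        + (\<Sum>l<m. B $$ (j, l) * (\<Sum>i\<in>I. \<alpha> i * u i k $ l))"
      by (simp add: ring_distribs sum.distrib sum_distrib_left sum.swap[of _ I] mult.left_commute)
    finally show "weighted_sum n \<alpha> I x (k + 1) $ j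
        = (A *\<^sub>v weighted_sum n \<alpha> I x k + B *\<^sub>v weighted_sum m \<alpha> I u k) $ j"
      using A B j by (simp add: weighted_sum_def scalar_prod_def atLeast0LessThan)
  qed (use B in \<open>simp add: weighted_sum_def\<close>)
qed (use A B in \<open>auto simp: weighted_sum_def\<close>)

lemma set_cols_hankel_signal:
  assumes "1 \<le> T"
  shows "set (cols (hankel m K u 0 (T - 1))) = window m K u ` {c. c + K \<le> T}"
proof -
  have "{..<T - 1 + 2 - 0 - K} = {c. c + K \<le> T}" using assms by auto
  thus ?thesis by (simp add: set_cols_hankel)
qed

lemma set_cols_stacked_hankel:
  assumes "1 \<le> L" and "L \<le> T"
  shows "set (cols (hankel n 1 x 0 (T - L) @\<^sub>r hankel m L u 0 (T - 1)))
    = (\<lambda>c. window n 1 x c @\<^sub>v window m L u c) ` {c. c + L \<le> T}"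
proof -
  have "{..<T - L + 2 - 0 - 1} = {c. c + L \<le> T}" using assms by auto
  thus ?thesis using assms
    by (subst set_cols_append_rows) (auto simp: col_hankel)
qed

lemma dim_row_hankel_mos [simp]: "dim_row (hankel_mos q K z a b \<alpha> lo hi) = q * K"
  by (simp add: hankel_mos_def del: upt_Suc)

lemma set_cols_hankel_mos:
  "set (cols (hankel_mos q K z 0 b \<alpha> lo hi))
    = (\<Union>i\<in>{lo..hi}. (\<lambda>w. \<alpha> i \<cdot>\<^sub>v w) ` set (cols (hankel q K (z i) 0 (b i))))"
proof -
  have "set (cols (hankel_mos q K z 0 b \<alpha> lo hi))
      = (\<Union>M\<in>set (map (\<lambda>i. \<alpha> i \<cdot>\<^sub>m hankel q K (z i) 0 (b i)) [lo..<Suc hi]). set (cols M))"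
    unfolding hankel_mos_def by (rule set_cols_hcat) auto
  also have "\<dots> = (\<Union>i\<in>{lo..hi}. (\<lambda>w. \<alpha> i \<cdot>\<^sub>v w) ` set (cols (hankel q K (z i) 0 (b i))))"
    by (simp add: set_cols_smult atLeastLessThanSuc_atLeastAtMost del: upt_Suc)
  finally show ?thesis .
qed

lemma orth_compl_cols_hankel_mos:
  assumes "\<forall>i\<in>{lo..hi}. \<alpha> i \<noteq> 0" and "\<forall>i\<in>{lo..hi}. 1 \<le> T i"
  shows "orth_compl (m * K) (set (cols (hankel_mos m K u 0 (\<lambda>i. T i - 1) \<alpha> lo hi)))
    = orth_compl (m * K) (input_windows m K ((\<lambda>i. (x i, u i, T i)) ` {lo..hi}))"
proof -
  have cols: "set (cols (hankel_mos m K u 0 (\<lambda>i. T i - 1) \<alpha> lo hi))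
      = (\<Union>i\<in>{lo..hi}. (\<lambda>w. \<alpha> i \<cdot>\<^sub>v w) ` window m K (u i) ` {c. c + K \<le> T i})"
    unfolding set_cols_hankel_mos using assms(2)
    by (intro SUP_cong refl arg_cong[where f = "image _"] set_cols_hankel_signal) auto
  have "orth_compl (m * K) (\<Union>i\<in>{lo..hi}. (\<lambda>w. \<alpha> i \<cdot>\<^sub>v w) ` window m K (u i) ` {c. c + K \<le> T i})
      = orth_compl (m * K) (\<Union>i\<in>{lo..hi}. window m K (u i) ` {c. c + K \<le> T i})"
    by (rule orth_compl_UN_smult) (use assms(1) in auto)
  thus ?thesis unfolding cols input_windows_image .
qed

lemma orth_compl_cols_stacked_hankel_mos:
  assumes "\<forall>i\<in>{lo..hi}. \<alpha> i \<noteq> 0" and L: "1 \<le> L" and T: "\<forall>i\<in>{lo..hi}. L \<le> T i"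
  shows "orth_compl (n + m * L) (set (cols (hankel_mos n 1 x 0 (\<lambda>i. T i - L) \<alpha> lo hi
      @\<^sub>r hankel_mos m L u 0 (\<lambda>i. T i - 1) \<alpha> lo hi)))
    = orth_compl (n + m * L) (state_input_windows n m L ((\<lambda>i. (x i, u i, T i)) ` {lo..hi}))"
proof -
  let ?X = "\<lambda>i. hankel n 1 (x i) 0 (T i - L)" and ?U = "\<lambda>i. hankel m L (u i) 0 (T i - 1)"
  have dims: "dim_col (?X i) = dim_col (?U i)" if "i \<in> {lo..hi}" for i
  proof -
    have "L \<le> T i" using that T by auto
    thus ?thesis using L by simp
  qed
  let ?Xs = "map (\<lambda>i. \<alpha> i \<cdot>\<^sub>m ?X i) [lo..<Suc hi]" and ?Us = "map (\<lambda>i. \<alpha> i \<cdot>\<^sub>m ?U i) [lo..<Suc hi]"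
  have "list_all2 (\<lambda>X U. dim_row X = n * 1 \<and> dim_row U = m * L \<and> dim_col X = dim_col U) ?Xs ?Us"
    using dims by (auto simp: list_all2_map1 list_all2_map2 list_all2_same simp del: upt_Suc)
  moreover have "map2 (@\<^sub>r) ?Xs ?Us = map (\<lambda>i. \<alpha> i \<cdot>\<^sub>m (?X i @\<^sub>r ?U i)) [lo..<Suc hi]"
    using dims by (auto simp: zip_map_map zip_same_conv_map smult_append_rows simp del: upt_Suc)
  ultimately have "hankel_mos n 1 x 0 (\<lambda>i. T i - L) \<alpha> lo hi @\<^sub>r hankel_mos m L u 0 (\<lambda>i. T i - 1) \<alpha> lo hi
      = hcat (n * 1 + m * L) (map (\<lambda>i. \<alpha> i \<cdot>\<^sub>m (?X i @\<^sub>r ?U i)) [lo..<Suc hi])"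
    unfolding hankel_mos_def by (simp only: hcat_append_rows)
  hence "set (cols (hankel_mos n 1 x 0 (\<lambda>i. T i - L) \<alpha> lo hi @\<^sub>r hankel_mos m L u 0 (\<lambda>i. T i - 1) \<alpha> lo hi))
      = (\<Union>i\<in>{lo..hi}. (\<lambda>w. \<alpha> i \<cdot>\<^sub>v w) ` set (cols (?X i @\<^sub>r ?U i)))"
    by (simp add: set_cols_hcat set_cols_smult atLeastLessThanSuc_atLeastAtMost del: upt_Suc)
  also have "\<dots> = (\<Union>i\<in>{lo..hi}. (\<lambda>w. \<alpha> i \<cdot>\<^sub>v w) ` (\<lambda>c. window n 1 (x i) c @\<^sub>v window m L (u i) c) ` {c. c + L \<le> T i})"
    using T L by (intro SUP_cong refl arg_cong[where f = "image _"] set_cols_stacked_hankel) auto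
  finally have cols: "set (cols (hankel_mos n 1 x 0 (\<lambda>i. T i - L) \<alpha> lo hi
      @\<^sub>r hankel_mos m L u 0 (\<lambda>i. T i - 1) \<alpha> lo hi))
    = (\<Union>i\<in>{lo..hi}. (\<lambda>w. \<alpha> i \<cdot>\<^sub>v w) ` (\<lambda>c. window n 1 (x i) c @\<^sub>v window m L (u i) c) ` {c. c + L \<le> T i})" .
  have "orth_compl (n + m * L) (\<Union>i\<in>{lo..hi}. (\<lambda>w. \<alpha> i \<cdot>\<^sub>v w) ` (\<lambda>c. window n 1 (x i) c @\<^sub>v window m L (u i) c) ` {c. c + L \<le> T i})
      = orth_compl (n + m * L) (\<Union>i\<in>{lo..hi}. (\<lambda>c. window n 1 (x i) c @\<^sub>v window m L (u i) c) ` {c. c + L \<le> T i})"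
    using window_carrier[of n 1] by (intro orth_compl_UN_smult) (use assms(1) in auto)
  thus ?thesis unfolding cols state_input_windows_image .
qed

lemma dim_col_hankel_mos_eq:
  assumes L: "1 \<le> L" and T: "\<forall>i\<in>{lo..hi}. L \<le> T i"
  shows "dim_col (hankel_mos n 1 x 0 (\<lambda>i. T i - L) \<alpha> lo hi) = dim_col (hankel_mos m L u 0 (\<lambda>i. T i - 1) \<alpha> lo hi)"
proof -
  have "dim_col (\<alpha> i \<cdot>\<^sub>m hankel n 1 (x i) 0 (T i - L)) = dim_col (\<alpha> i \<cdot>\<^sub>m hankel m L (u i) 0 (T i - 1))"
    if "i \<in> set [lo..<Suc hi]" for i
  proof -
    have "L \<le> T i" using that T by (auto simp del: upt_Suc)
    thus ?thesis using L by simp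
  qed
  thus ?thesis
    unfolding hankel_mos_def dim_hcat map_map comp_def
    by (intro arg_cong[where f = sum_list] map_cong refl)
qed

lemma orth_compl_Un:
  "orth_compl r (V \<union> W) = orth_compl r V \<inter> orth_compl r W"
  by (auto simp: vec_module.orthogonal_complement_def)

lemma mrank_stacked_eq_of_columns:
  assumes A: "A \<in> carrier_mat n n" and B: "B \<in> carrier_mat n m" and ctrb: "controllable n A B"
    and L: "1 \<le> L" and traj: "\<And>x u T. (x, u, T) \<in> S \<Longrightarrow> trajectory A B x u T"
    and H: "mrank H = m * (L + n)" "dim_row H = m * (L + n)"
      "orth_compl (m * (L + n)) (set (cols H)) = orth_compl (m * (L + n)) (input_windows m (L + n) S)"
    and M: "dim_row M = n + m * L"
      "orth_compl (n + m * L) (set (cols M)) = orth_compl (n + m * L) (state_input_windows n m L S)"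
  shows "mrank M = n + m * L"
proof -
  have pe: "orth_compl (m * (L + n)) (input_windows m (L + n) S) = {0\<^sub>v (m * (L + n))}"
    using H mrank_eq_dim_row_iff[of H] by simp
  have "orth_compl (n + m * L) (state_input_windows n m L S) = {0\<^sub>v (n + m * L)}"
    by (rule orth_compl_state_input_windows[OF A B ctrb L _ pe]) (fact traj)
  thus ?thesis using M mrank_eq_dim_row_iff[of M] by simp
qed

lemma mrank_stacked_hankel_mos:
  assumes A: "A \<in> carrier_mat n n" and B: "B \<in> carrier_mat n m" and ctrb: "controllable n A B"
    and traj: "\<forall>i\<in>{1..p}. trajectory A B (x i) (u i) (T i)"
    and L: "1 \<le> L" and alpha: "\<forall>i\<in>{1..p}. \<alpha> i \<noteq> 0"
    and pe: "MCPE m (L + n) u T p"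
  shows "mrank (hankel_mos n 1 x 0 (\<lambda>i. T i - L) \<alpha> 1 p @\<^sub>r hankel_mos m L u 0 (\<lambda>i. T i - 1) \<alpha> 1 p)
    = n + m * L"
proof -
  have T: "\<forall>i\<in>{1..p}. L + n \<le> T i"
    and rk: "mrank (hankel_mos m (L + n) u 0 (\<lambda>i. T i - 1) \<alpha> 1 p) = m * (L + n)"
    using pe alpha unfolding MCPE_def by auto
  show ?thesis
  proof (rule mrank_stacked_eq_of_columns[OF A B ctrb L _ rk])
    show "trajectory A B x' u' T'" if "(x', u', T') \<in> (\<lambda>i. (x i, u i, T i)) ` {1..p}" for x' u' T'
      using that traj by auto
    show "orth_compl (m * (L + n)) (set (cols (hankel_mos m (L + n) u 0 (\<lambda>i. T i - 1) \<alpha> 1 p)))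
      = orth_compl (m * (L + n)) (input_windows m (L + n) ((\<lambda>i. (x i, u i, T i)) ` {1..p}))"
      using alpha T L by (intro orth_compl_cols_hankel_mos) auto
    show "orth_compl (n + m * L) (set (cols (hankel_mos n 1 x 0 (\<lambda>i. T i - L) \<alpha> 1 p
        @\<^sub>r hankel_mos m L u 0 (\<lambda>i. T i - 1) \<alpha> 1 p)))
      = orth_compl (n + m * L) (state_input_windows n m L ((\<lambda>i. (x i, u i, T i)) ` {1..p}))"
      using alpha T L by (intro orth_compl_cols_stacked_hankel_mos) auto
  qed (simp_all add: hankel_mos_def)
qed

lemma mrank_stacked_hankel_cum:
  assumes A: "A \<in> carrier_mat n n" and B: "B \<in> carrier_mat n m" and ctrb: "controllable n A B"
    and traj: "\<forall>i\<in>{1..p}. trajectory A B (x i) (u i) (T i)"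
    and L: "1 \<le> L" and alpha: "\<forall>i\<in>{1..p}. \<alpha> i \<noteq> 0"
    and T0: "\<forall>i\<in>{1..p}. T i = T0" and pe: "CCPE m (L + n) u T0 p"
  shows "mrank (hankel_cum n 1 x 0 (T0 - L) \<alpha> 1 p @\<^sub>r hankel_cum m L u 0 (T0 - 1) \<alpha> 1 p) = n + m * L"
proof -
  define xs us where "xs = weighted_sum n \<alpha> {1..p} x" and "us = weighted_sum m \<alpha> {1..p} u"
  have LT: "L + n \<le> T0" and rk: "mrank (hankel m (L + n) us 0 (T0 - 1)) = m * (L + n)"
    using pe alpha unfolding CCPE_def us_def hankel_cum_eq_hankel by auto
  have "trajectory A B xs us T0"
    unfolding xs_def us_def using traj T0 by (intro trajectory_weighted_sum[OF A B]) auto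
  moreover have "set (cols (hankel m (L + n) us 0 (T0 - 1))) = window m (L + n) us ` {c. c + (L + n) \<le> T0}"
    by (rule set_cols_hankel_signal) (use LT L in simp)
  moreover have "set (cols (hankel n 1 xs 0 (T0 - L) @\<^sub>r hankel m L us 0 (T0 - 1)))
      = (\<lambda>c. window n 1 xs c @\<^sub>v window m L us c) ` {c. c + L \<le> T0}"
    by (rule set_cols_stacked_hankel) (use LT L in simp_all)
  ultimately have "mrank (hankel n 1 xs 0 (T0 - L) @\<^sub>r hankel m L us 0 (T0 - 1)) = n + m * L"
    by (intro mrank_stacked_eq_of_columns[OF A B ctrb L _ rk, where S = "{(xs, us, T0)}"])
      (simp_all add: input_windows_def state_input_windows_def)
  thus ?thesis unfolding xs_def us_def hankel_cum_eq_hankel .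
qed

lemma orth_compl_cols_hankel_hyb:
  assumes alpha: "\<forall>i\<in>{Suc pbar..p}. \<alpha> i \<noteq> 0" and T0: "1 \<le> T0" and T: "\<forall>i\<in>{Suc pbar..p}. 1 \<le> T i"
  shows "orth_compl (m * K) (set (cols (hankel_hyb m K u 0 (T0 - 1) (\<lambda>i. T i - 1) \<alpha> pbar p)))
    = orth_compl (m * K) (input_windows m K
        (insert (xs, weighted_sum m \<alpha> {1..pbar} u, T0) ((\<lambda>i. (x i, u i, T i)) ` {Suc pbar..p})))"
proof -
  let ?us = "weighted_sum m \<alpha> {1..pbar} u" and ?H = "hankel_mos m K u 0 (\<lambda>i. T i - 1) \<alpha> (Suc pbar) p"
  have "set (cols (hankel_hyb m K u 0 (T0 - 1) (\<lambda>i. T i - 1) \<alpha> pbar p))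
      = set (cols (hankel m K ?us 0 (T0 - 1))) \<union> set (cols ?H)"
    unfolding hankel_hyb_def hankel_cum_eq_hankel by (subst set_cols_hcat) (simp_all del: hcat.simps)
  also have "set (cols (hankel m K ?us 0 (T0 - 1))) = window m K ?us ` {c. c + K \<le> T0}"
    by (rule set_cols_hankel_signal[OF T0])
  finally have cols: "set (cols (hankel_hyb m K u 0 (T0 - 1) (\<lambda>i. T i - 1) \<alpha> pbar p))
      = window m K ?us ` {c. c + K \<le> T0} \<union> set (cols ?H)" .
  have "orth_compl (m * K) (set (cols ?H))
      = orth_compl (m * K) (input_windows m K ((\<lambda>i. (x i, u i, T i)) ` {Suc pbar..p}))"
    by (rule orth_compl_cols_hankel_mos) (use alpha T in auto)
  thus ?thesis unfolding cols input_windows_insert orth_compl_Un by simp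
qed

lemma orth_compl_cols_stacked_hankel_hyb:
  assumes alpha: "\<forall>i\<in>{Suc pbar..p}. \<alpha> i \<noteq> 0" and L: "1 \<le> L"
    and T0: "L \<le> T0" and T: "\<forall>i\<in>{Suc pbar..p}. L \<le> T i"
  shows "orth_compl (n + m * L) (set (cols (hankel_hyb n 1 x 0 (T0 - L) (\<lambda>i. T i - L) \<alpha> pbar p
      @\<^sub>r hankel_hyb m L u 0 (T0 - 1) (\<lambda>i. T i - 1) \<alpha> pbar p)))
    = orth_compl (n + m * L) (state_input_windows n m L
        (insert (weighted_sum n \<alpha> {1..pbar} x, weighted_sum m \<alpha> {1..pbar} u, T0)
          ((\<lambda>i. (x i, u i, T i)) ` {Suc pbar..p})))"
proof -
  let ?xs = "weighted_sum n \<alpha> {1..pbar} x" and ?us = "weighted_sum m \<alpha> {1..pbar} u"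
  let ?Hx = "hankel_mos n 1 x 0 (\<lambda>i. T i - L) \<alpha> (Suc pbar) p"
  let ?Hu = "hankel_mos m L u 0 (\<lambda>i. T i - 1) \<alpha> (Suc pbar) p"
  have "hankel_hyb n 1 x 0 (T0 - L) (\<lambda>i. T i - L) \<alpha> pbar p @\<^sub>r hankel_hyb m L u 0 (T0 - 1) (\<lambda>i. T i - 1) \<alpha> pbar p
      = hcat (n * 1 + m * L) [hankel n 1 ?xs 0 (T0 - L) @\<^sub>r hankel m L ?us 0 (T0 - 1), ?Hx @\<^sub>r ?Hu]"
    unfolding hankel_hyb_def hankel_cum_eq_hankel
    using T0 L dim_col_hankel_mos_eq[OF L T, of n x \<alpha> m u]
    by (subst hcat_append_rows) (auto simp del: hcat.simps)
  hence "set (cols (hankel_hyb n 1 x 0 (T0 - L) (\<lambda>i. T i - L) \<alpha> pbar p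
      @\<^sub>r hankel_hyb m L u 0 (T0 - 1) (\<lambda>i. T i - 1) \<alpha> pbar p))
      = set (cols (hankel n 1 ?xs 0 (T0 - L) @\<^sub>r hankel m L ?us 0 (T0 - 1))) \<union> set (cols (?Hx @\<^sub>r ?Hu))"
    by (simp add: set_cols_hcat del: hcat.simps)
  also have "set (cols (hankel n 1 ?xs 0 (T0 - L) @\<^sub>r hankel m L ?us 0 (T0 - 1)))
      = (\<lambda>c. window n 1 ?xs c @\<^sub>v window m L ?us c) ` {c. c + L \<le> T0}"
    by (rule set_cols_stacked_hankel[OF L T0])
  finally have cols: "set (cols (hankel_hyb n 1 x 0 (T0 - L) (\<lambda>i. T i - L) \<alpha> pbar p
      @\<^sub>r hankel_hyb m L u 0 (T0 - 1) (\<lambda>i. T i - 1) \<alpha> pbar p))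
      = (\<lambda>c. window n 1 ?xs c @\<^sub>v window m L ?us c) ` {c. c + L \<le> T0} \<union> set (cols (?Hx @\<^sub>r ?Hu))" .
  have "orth_compl (n + m * L) (set (cols (?Hx @\<^sub>r ?Hu)))
      = orth_compl (n + m * L) (state_input_windows n m L ((\<lambda>i. (x i, u i, T i)) ` {Suc pbar..p}))"
    by (rule orth_compl_cols_stacked_hankel_mos[OF alpha L T])
  thus ?thesis unfolding cols state_input_windows_insert orth_compl_Un by simp
qed

lemma mrank_stacked_hankel_hyb:
  assumes A: "A \<in> carrier_mat n n" and B: "B \<in> carrier_mat n m" and ctrb: "controllable n A B"
    and traj: "\<forall>i\<in>{1..p}. trajectory A B (x i) (u i) (T i)"
    and L: "1 \<le> L" and alpha: "\<forall>i\<in>{1..p}. \<alpha> i \<noteq> 0"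
    and pbar: "pbar \<le> p" and T0: "\<forall>i\<in>{1..pbar}. T i = T0" and pe: "HCPE m (L + n) u T0 T pbar p"
  shows "mrank (hankel_hyb n 1 x 0 (T0 - L) (\<lambda>i. T i - L) \<alpha> pbar p
      @\<^sub>r hankel_hyb m L u 0 (T0 - 1) (\<lambda>i. T i - 1) \<alpha> pbar p) = n + m * L"
proof -
  let ?xs = "weighted_sum n \<alpha> {1..pbar} x" and ?us = "weighted_sum m \<alpha> {1..pbar} u"
  let ?S = "insert (?xs, ?us, T0) ((\<lambda>i. (x i, u i, T i)) ` {Suc pbar..p})"
  have LT: "L + n \<le> T0" and T: "\<forall>i\<in>{Suc pbar..p}. L + n \<le> T i"
    and rk: "mrank (hankel_hyb m (L + n) u 0 (T0 - 1) (\<lambda>i. T i - 1) \<alpha> pbar p) = m * (L + n)"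
    using pe alpha unfolding HCPE_def by auto
  have alpha': "\<forall>i\<in>{Suc pbar..p}. \<alpha> i \<noteq> 0" using alpha pbar by auto
  have "trajectory A B (x i) (u i) T0" if "i \<in> {1..pbar}" for i
  proof -
    have "i \<in> {1..p}" and "T i = T0" using that pbar T0 by auto
    thus ?thesis using traj by auto
  qed
  hence "trajectory A B ?xs ?us T0" by (rule trajectory_weighted_sum[OF A B])
  hence traj_S: "trajectory A B x' u' T'" if "(x', u', T') \<in> ?S" for x' u' T'
    using that traj pbar by auto
  show ?thesis
  proof (rule mrank_stacked_eq_of_columns[OF A B ctrb L traj_S rk])
    show "orth_compl (m * (L + n)) (set (cols (hankel_hyb m (L + n) u 0 (T0 - 1) (\<lambda>i. T i - 1) \<alpha> pbar p)))
      = orth_compl (m * (L + n)) (input_windows m (L + n) ?S)"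
      by (rule orth_compl_cols_hankel_hyb) (use alpha' LT L T in auto)
    show "orth_compl (n + m * L) (set (cols (hankel_hyb n 1 x 0 (T0 - L) (\<lambda>i. T i - L) \<alpha> pbar p
        @\<^sub>r hankel_hyb m L u 0 (T0 - 1) (\<lambda>i. T i - 1) \<alpha> pbar p)))
      = orth_compl (n + m * L) (state_input_windows n m L ?S)"
      by (rule orth_compl_cols_stacked_hankel_hyb) (use alpha' LT L T in auto)
  qed (simp_all add: hankel_hyb_def del: hcat.simps)
qed

theorem lemma1:
  fixes n m p pbar L T0 :: nat
    and A B :: "real mat"
    and T :: "nat \<Rightarrow> nat"
    and u x :: "nat \<Rightarrow> nat \<Rightarrow> real vec"
    and \<alpha> :: "nat \<Rightarrow> real"
  assumes A: "A \<in> carrier_mat n n"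
    and B: "B \<in> carrier_mat n m"
    and ctrb: "controllable n A B"
    and u_dim: "\<forall>i\<in>{1..p}. \<forall>k<T i. u i k \<in> carrier_vec m"
    and x_dim: "\<forall>i\<in>{1..p}. \<forall>k<T i. x i k \<in> carrier_vec n"
    and traj: "\<forall>i\<in>{1..p}. \<forall>k. k + 1 < T i \<longrightarrow> x i (k + 1) = A *\<^sub>v x i k + B *\<^sub>v u i k"
    and L: "L \<ge> 1"
    and alpha: "\<forall>i\<in>{1..p}. \<alpha> i \<noteq> 0"
  shows
    "((\<forall>i\<in>{1..p}. T i = T0) \<and> CCPE m (L + n) u T0 p \<longrightarrow>
        mrank (hankel_cum n 1 x 0 (T0 - L) \<alpha> 1 p @\<^sub>r hankel_cum m L u 0 (T0 - 1) \<alpha> 1 p)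
          = n + m * L)
   \<and> (MCPE m (L + n) u T p \<longrightarrow>
        mrank (hankel_mos n 1 x 0 (\<lambda>i. T i - L) \<alpha> 1 p @\<^sub>r hankel_mos m L u 0 (\<lambda>i. T i - 1) \<alpha> 1 p)
          = n + m * L)
   \<and> (pbar \<le> p \<and> (\<forall>i\<in>{1..pbar}. T i = T0) \<and> HCPE m (L + n) u T0 T pbar p \<longrightarrow>
        mrank (hankel_hyb n 1 x 0 (T0 - L) (\<lambda>i. T i - L) \<alpha> pbar p
               @\<^sub>r hankel_hyb m L u 0 (T0 - 1) (\<lambda>i. T i - 1) \<alpha> pbar p)
          = n + m * L)"
proof -
  have trajectories: "\<forall>i\<in>{1..p}. trajectory A B (x i) (u i) (T i)"
    using A B u_dim x_dim traj by (auto simp: trajectory_def)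
  show ?thesis
    using mrank_stacked_hankel_cum[OF A B ctrb trajectories L alpha]
      mrank_stacked_hankel_mos[OF A B ctrb trajectories L alpha]
      mrank_stacked_hankel_hyb[OF A B ctrb trajectories L alpha]
    by blast
qed

end
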